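(* There exist a joint distribution $P$ of $(x,a,y)$ with two protected groups $a\in\{1,2\}$ and binary labels $y\in\{0,1\}$, a score function $\mathcal{R}(x,a)\in\mathbb{R}$, and a choice of bias measure $\mathcal{B}$ (demographic parity or equal opportunity) such that the post-processing method (described in the context), with loss $\mathcal{L}$ equal to the misclassification rate, is not slack-consistent: there is an individual $(x,a)$ and slacks $0<\beta_1<\beta_2<\beta_3$ such that the values $f_{\beta_1}(x,a), f_{\beta_2}(x,a), f_{\beta_3}(x,a)$ are neither non-decreasing nor non-increasing.
   Context: Setting: individuals are pairs $(x,a)$ with features $x$ and group $a\in\{1,2\}$, label $y\in\{0,1\}$, all distributed according to $P$. A (possibly stochastic) classifier $f$ assigns to each $(x,a)$ a probability $f(x,a)\in[0,1]$ of a positive prediction. Demographic-parity bias: $\mathcal{B}(f)=E[f(x,a)\mid a=1]-E[f(x,a)\mid a=2]$. Equal-opportunity bias: $\mathcal{B}(f)=E[f(x,a)\mid a=1,y=1]-E[f(x,a)\mid a=2,y=1]$. Misclassification loss: $\mathcal{L}(f)=P(\text{prediction}\neq y)$ where the prediction is drawn positive with probability $f(x,a)$. Normalized thresholds: for a score function $\mathcal{R}$ and group $a$, a normalized threshold $\tau\in[0,1]$ denotes a (possibly randomized) threshold classifier on $\mathcal{R}(x,a)$ within group $a$, given by a randomization over at most two adjacent deterministic thresholds, whose positive prediction rate in group $a$ equals $1-\tau$. A pair $(\tau_1,\tau_2)$ thus defines a classifier (group $a$ uses $\tau_a$), and $\mathcal{L}(\tau_1,\tau_2)$, $\mathcal{B}(\tau_1,\tau_2)$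 denote its loss and bias. Post-processing method with slack $\beta>0$: among all $(\tau_1,\tau_2)\in[0,1]^2$ minimizing $\mathcal{L}(\tau_1,\tau_2)$ subject to $|\mathcal{B}(\tau_1,\tau_2)|\le\beta$, keep those with smallest $|\mathcal{B}|$; among those keep those with smallest $\tau_1$; among those return the one with smallest $\tau_2$. The resulting classifier is denoted $f_\beta$. Slack-consistency: a procedure producing $f_\beta$ for each slack $\beta>0$ is slack-consistent if for every individual $(x,a)$ the map $\beta\mapsto f_\beta(x,a)$ is monotonic (for all $\beta_1<\beta_2<\beta_3$, either $f_{\beta_1}(x,a)\le f_{\beta_2}(x,a)\le f_{\beta_3}(x,a)$ or $f_{\beta_1}(x,a)\ge f_{\beta_2}(x,a)\ge f_{\beta_3}(x,a)$). *)

theory Defs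
  imports "HOL-Probability.Probability"
begin

text \<open>A population is a discrete joint distribution P of (x, a, y) with
  features x :: real, group a :: nat (in {1,2}) and label y :: nat (in {0,1}).
  A (stochastic) classifier is f :: real \<Rightarrow> nat \<Rightarrow> real, giving the probability
  of a positive prediction.\<close>

type_synonym population = "(real \<times> nat \<times> nat) pmf"
type_synonym classifier = "real \<Rightarrow> nat \<Rightarrow> real"

definition grp :: "real \<times> nat \<times> nat \<Rightarrow> nat" where
  "grp z = fst (snd z)"

definition lbl :: "real \<times> nat \<times> nat \<Rightarrow> nat" where
  "lbl z = snd (snd z)"

definition cond_exp :: "population \<Rightarrow> classifier \<Rightarrow> (real \<times> nat \<times> nat \<Rightarrow> bool) \<Rightarrow> real" where
  "cond_exp P f E =
     measure_pmf.expectation P (\<lambda>z. if E z then f (fst z) (grp z) else 0)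
     / measure_pmf.prob P {z. E z}"

datatype bias_kind = DemographicParity | EqualOpportunity

definition bias :: "bias_kind \<Rightarrow> population \<Rightarrow> classifier \<Rightarrow> real" where
  "bias k P f = (case k of
      DemographicParity \<Rightarrow>
        cond_exp P f (\<lambda>z. grp z = 1) - cond_exp P f (\<lambda>z. grp z = 2)
    | EqualOpportunity \<Rightarrow>
        cond_exp P f (\<lambda>z. grp z = 1 \<and> lbl z = 1) - cond_exp P f (\<lambda>z. grp z = 2 \<and> lbl z = 1))"

definition loss :: "population \<Rightarrow> classifier \<Rightarrow> real" where
  "loss P f = measure_pmf.expectation P
      (\<lambda>z. if lbl z = 1 then 1 - f (fst z) (grp z) else f (fst z) (grp z))"

definition score_above :: "population \<Rightarrow> (real \<Rightarrow> nat \<Rightarrow> real) \<Rightarrow> nat \<Rightarrow> real \<Rightarrow> real" where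
  "score_above P R a r =
     measure_pmf.prob P {z. grp z = a \<and> R (fst z) a > r} / measure_pmf.prob P {z. grp z = a}"

definition score_at :: "population \<Rightarrow> (real \<Rightarrow> nat \<Rightarrow> real) \<Rightarrow> nat \<Rightarrow> real \<Rightarrow> real" where
  "score_at P R a r =
     measure_pmf.prob P {z. grp z = a \<and> R (fst z) a = r} / measure_pmf.prob P {z. grp z = a}"

text \<open>Normalized threshold tau in group a: the randomized threshold classifier on R(x,a)
  (positive above the threshold t, negative below, positive with probability p at t)
  whose positive rate in group a is 1 - tau.\<close>
definition norm_thr :: "population \<Rightarrow> (real \<Rightarrow> nat \<Rightarrow> real) \<Rightarrow> nat \<Rightarrow> real \<Rightarrow> real \<Rightarrow> real" where
  "norm_thr P R a \<tau> x =
     (let q = 1 - \<tau>; r = R x a; G = score_above P R a r; m = score_at P R a r in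
      if m > 0 then max 0 (min 1 ((q - G) / m)) else (if G < q then 1 else 0))"

definition thr_clf :: "population \<Rightarrow> (real \<Rightarrow> nat \<Rightarrow> real) \<Rightarrow> real \<Rightarrow> real \<Rightarrow> classifier" where
  "thr_clf P R \<tau>1 \<tau>2 = (\<lambda>x a. if a = 1 then norm_thr P R 1 \<tau>1 x
                              else if a = 2 then norm_thr P R 2 \<tau>2 x else 0)"

definition Lthr :: "population \<Rightarrow> (real \<Rightarrow> nat \<Rightarrow> real) \<Rightarrow> real \<Rightarrow> real \<Rightarrow> real" where
  "Lthr P R \<tau>1 \<tau>2 = loss P (thr_clf P R \<tau>1 \<tau>2)"

definition Bthr :: "bias_kind \<Rightarrow> population \<Rightarrow> (real \<Rightarrow> nat \<Rightarrow> real) \<Rightarrow> real \<Rightarrow> real \<Rightarrow> real" where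
  "Bthr k P R \<tau>1 \<tau>2 = bias k P (thr_clf P R \<tau>1 \<tau>2)"

definition feasible :: "bias_kind \<Rightarrow> population \<Rightarrow> (real \<Rightarrow> nat \<Rightarrow> real) \<Rightarrow> real \<Rightarrow> real \<Rightarrow> real \<Rightarrow> bool" where
  "feasible k P R \<beta> \<tau>1 \<tau>2 \<longleftrightarrow>
     \<tau>1 \<in> {0..1} \<and> \<tau>2 \<in> {0..1} \<and> \<bar>Bthr k P R \<tau>1 \<tau>2\<bar> \<le> \<beta>"

definition pp_output :: "bias_kind \<Rightarrow> population \<Rightarrow> (real \<Rightarrow> nat \<Rightarrow> real) \<Rightarrow> real \<Rightarrow> real \<Rightarrow> real \<Rightarrow> bool" where
  "pp_output k P R \<beta> \<tau>1 \<tau>2 \<longleftrightarrow>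
     feasible k P R \<beta> \<tau>1 \<tau>2 \<and>
     (\<forall>s1 s2. feasible k P R \<beta> s1 s2 \<longrightarrow>
        Lthr P R \<tau>1 \<tau>2 \<le> Lthr P R s1 s2 \<and>
        (Lthr P R s1 s2 = Lthr P R \<tau>1 \<tau>2 \<longrightarrow>
           \<bar>Bthr k P R \<tau>1 \<tau>2\<bar> \<le> \<bar>Bthr k P R s1 s2\<bar> \<and>
           (\<bar>Bthr k P R s1 s2\<bar> = \<bar>Bthr k P R \<tau>1 \<tau>2\<bar> \<longrightarrow>
              \<tau>1 \<le> s1 \<and> (s1 = \<tau>1 \<longrightarrow> \<tau>2 \<le> s2))))"

definition valid_pop :: "bias_kind \<Rightarrow> population \<Rightarrow> bool" where
  "valid_pop k P \<longleftrightarrow>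
     (\<forall>z \<in> set_pmf P. grp z \<in> {1, 2} \<and> lbl z \<in> {0, 1}) \<and>
     measure_pmf.prob P {z. grp z = 1} > 0 \<and> measure_pmf.prob P {z. grp z = 2} > 0 \<and>
     (k = EqualOpportunity \<longrightarrow>
        measure_pmf.prob P {z. grp z = 1 \<and> lbl z = 1} > 0 \<and>
        measure_pmf.prob P {z. grp z = 2 \<and> lbl z = 1} > 0)"

end

theory Submission
  imports Defs
begin

text \<open>Demographic parity already gives a counterexample. Take five equally likely individuals:
  in group 1 one positive with score 0 and two negatives with score 1, in group 2 two positives
  with score 0. On thresholds in [0,1] the bias is \<open>\<tau>2 - \<tau>1\<close> and five times the loss is
  \<open>g \<tau>1 + 2 \<tau>2\<close>, where g counts the expected errors in group 1. Because the score ranks the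
  negatives above the positive, g is not monotone: \<open>g 0 = 2\<close>, \<open>g (1/3) = 3\<close>, \<open>g 1 = 1\<close>.
  For slack \<open>\<beta> < 1/2\<close> the unique optimum is (0, 0); for \<open>1/2 < \<beta> \<le> 1\<close> it jumps to
  \<open>(1, 1 - \<beta>)\<close>, of cost \<open>3 - 2\<beta>\<close>. So a member of group 2 is accepted with probability 1 at
  \<open>\<beta> = 1/4\<close>, 3/4 at \<open>\<beta> = 3/4\<close> and 1 again at \<open>\<beta> = 1\<close>.\<close>

lemma pp_output_if_strict_loss_minimizer:
  assumes "feasible k P R \<beta> t1 t2"
    and "\<And>s1 s2. feasible k P R \<beta> s1 s2 \<Longrightarrow> (s1, s2) \<noteq> (t1, t2) \<Longrightarrow>
           Lthr P R t1 t2 < Lthr P R s1 s2"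
  shows "pp_output k P R \<beta> t1 t2"
proof -
  have "(s1, s2) = (t1, t2) \<or> Lthr P R t1 t2 < Lthr P R s1 s2"
    if "feasible k P R \<beta> s1 s2" for s1 s2
    using assms(2)[OF that] by blast
  then show ?thesis
    using assms(1) unfolding pp_output_def by fastforce
qed

definition example_support :: "(real \<times> nat \<times> nat) set" where
  "example_support = {(0, 1, 1), (1, 1, 0), (2, 1, 0), (0, 2, 1), (1, 2, 1)}"

definition example_pop :: population where
  "example_pop = pmf_of_set example_support"

definition example_score :: "real \<Rightarrow> nat \<Rightarrow> real" where
  "example_score x a = (if a = 1 \<and> 1 \<le> x then 1 else 0)"

lemma finite_example_support: "finite example_support"
  and example_support_nonempty: "example_support \<noteq> {}"
  and card_example_support: "card example_support = 5"
  by (auto simp: example_support_def)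

lemma set_pmf_example_pop: "set_pmf example_pop = example_support"
  unfolding example_pop_def
  using finite_example_support example_support_nonempty by simp

lemma prob_example_pop:
  "measure_pmf.prob example_pop A = real (card (example_support \<inter> A)) / 5"
  unfolding example_pop_def using finite_example_support example_support_nonempty
  by (simp add: measure_pmf_of_set card_example_support)

lemma expectation_example_pop:
  "measure_pmf.expectation example_pop (f :: _ \<Rightarrow> real) =
     (f (0, 1, 1) + f (1, 1, 0) + f (2, 1, 0) + f (0, 2, 1) + f (1, 2, 1)) / 5"
  unfolding example_pop_def using finite_example_support example_support_nonempty
  by (simp add: integral_pmf_of_set card_example_support del: One_nat_def)
     (simp add: example_support_def del: One_nat_def)

lemma prob_example_group1: "measure_pmf.prob example_pop {z. grp z = 1} = 3/5"
  and prob_example_group2: "measure_pmf.prob example_pop {z. grp z = 2} = 2/5"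
  by (simp_all add: prob_example_pop example_support_def grp_def)

lemma valid_pop_example: "valid_pop DemographicParity example_pop"
  unfolding valid_pop_def set_pmf_example_pop prob_example_group1 prob_example_group2
  by (auto simp: example_support_def grp_def lbl_def)

lemma norm_thr_example:
  assumes "\<tau> \<in> {0..1}"
  shows "norm_thr example_pop example_score 1 \<tau> 0 = max 0 (1 - 3 * \<tau>)"
    and "1 \<le> x \<Longrightarrow> norm_thr example_pop example_score 1 \<tau> x = min 1 (3 * (1 - \<tau>) / 2)"
    and "norm_thr example_pop example_score 2 \<tau> x = 1 - \<tau>"
proof -
  have scores:
    "score_above example_pop example_score 1 0 = 2/3" "score_at example_pop example_score 1 0 = 1/3"
    "score_above example_pop example_score 1 1 = 0" "score_at example_pop example_score 1 1 = 2/3"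
    "score_above example_pop example_score 2 0 = 0" "score_at example_pop example_score 2 0 = 1"
    by (simp_all add: score_above_def score_at_def prob_example_group1 prob_example_group2
        del: One_nat_def)
      (simp_all add: prob_example_pop example_support_def grp_def example_score_def)
  show "norm_thr example_pop example_score 1 \<tau> 0 = max 0 (1 - 3 * \<tau>)"
    using assms by (simp add: norm_thr_def example_score_def scores del: One_nat_def)
  show "norm_thr example_pop example_score 1 \<tau> x = min 1 (3 * (1 - \<tau>) / 2)" if "1 \<le> x"
    using assms that
    by (simp add: norm_thr_def example_score_def scores mult.commute del: One_nat_def)
  show "norm_thr example_pop example_score 2 \<tau> x = 1 - \<tau>"
    using assms by (simp add: norm_thr_def example_score_def scores del: One_nat_def)
qed

definition group1_errors :: "real \<Rightarrow> real" where
  "group1_errors \<tau> = (if \<tau> \<le> 1/3 then 2 + 3 * \<tau> else 4 - 3 * \<tau>)"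

lemma Lthr_example:
  assumes "\<tau>1 \<in> {0..1}" "\<tau>2 \<in> {0..1}"
  shows "Lthr example_pop example_score \<tau>1 \<tau>2 = (group1_errors \<tau>1 + 2 * \<tau>2) / 5"
  using assms
  by (simp add: Lthr_def loss_def expectation_example_pop thr_clf_def norm_thr_example
      lbl_def grp_def group1_errors_def max_def min_def del: One_nat_def)

lemma Bthr_example:
  assumes "\<tau>1 \<in> {0..1}" "\<tau>2 \<in> {0..1}"
  shows "Bthr DemographicParity example_pop example_score \<tau>1 \<tau>2 = \<tau>2 - \<tau>1"
  using assms
  unfolding Bthr_def bias_def cond_exp_def prob_example_group1 prob_example_group2
  by (simp add: expectation_example_pop thr_clf_def norm_thr_example grp_def max_def min_def
      del: One_nat_def)
    (simp add: field_simps)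

lemma pp_output_example_if_strict_minimizer:
  assumes "\<tau>1 \<in> {0..1}" "\<tau>2 \<in> {0..1}" "\<bar>\<tau>2 - \<tau>1\<bar> \<le> \<beta>"
    and "\<And>s1 s2. s1 \<in> {0..1} \<Longrightarrow> s2 \<in> {0..1} \<Longrightarrow> \<bar>s2 - s1\<bar> \<le> \<beta> \<Longrightarrow> (s1, s2) \<noteq> (\<tau>1, \<tau>2) \<Longrightarrow>
           group1_errors \<tau>1 + 2 * \<tau>2 < group1_errors s1 + 2 * s2"
  shows "pp_output DemographicParity example_pop example_score \<beta> \<tau>1 \<tau>2"
proof (rule pp_output_if_strict_loss_minimizer)
  have feasible_iff: "feasible DemographicParity example_pop example_score \<beta> s1 s2 \<longleftrightarrow>
      s1 \<in> {0..1} \<and> s2 \<in> {0..1} \<and> \<bar>s2 - s1\<bar> \<le> \<beta>" for s1 s2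
    unfolding feasible_def by (auto simp: Bthr_example)
  show "feasible DemographicParity example_pop example_score \<beta> \<tau>1 \<tau>2"
    using assms(1-3) feasible_iff by blast
  fix s1 s2
  assume "feasible DemographicParity example_pop example_score \<beta> s1 s2"
    and other: "(s1, s2) \<noteq> (\<tau>1, \<tau>2)"
  then have s: "s1 \<in> {0..1}" "s2 \<in> {0..1}" "\<bar>s2 - s1\<bar> \<le> \<beta>"
    by (simp_all add: feasible_iff)
  show "Lthr example_pop example_score \<tau>1 \<tau>2 < Lthr example_pop example_score s1 s2"
    unfolding Lthr_example[OF assms(1,2)] Lthr_example[OF s(1,2)]
    using assms(4)[OF s other] by simp
qed

lemma pp_output_example_low_slack:
  assumes "0 \<le> \<beta>" "\<beta> < 1/2"
  shows "pp_output DemographicParity example_pop example_score \<beta> 0 0"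
  using assms
  by (intro pp_output_example_if_strict_minimizer) (auto simp: group1_errors_def abs_le_iff)

lemma pp_output_example_high_slack:
  assumes "1/2 < \<beta>" "\<beta> \<le> 1"
  shows "pp_output DemographicParity example_pop example_score \<beta> 1 (1 - \<beta>)"
  using assms
  by (intro pp_output_example_if_strict_minimizer) (auto simp: group1_errors_def abs_le_iff)

lemma thr_clf_example_group2:
  assumes "\<tau>2 \<in> {0..1}"
  shows "thr_clf example_pop example_score \<tau>1 \<tau>2 x 2 = 1 - \<tau>2"
  using assms by (simp add: thr_clf_def norm_thr_example)

theorem theorem1:
  shows "\<exists>(P :: population) (R :: real \<Rightarrow> nat \<Rightarrow> real) (k :: bias_kind)
            (x :: real) (a :: nat) (y :: nat) (\<beta>1 :: real) \<beta>2 \<beta>3 \<tau>1 \<tau>2 \<sigma>1 \<sigma>2 \<rho>1 \<rho>2.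
     valid_pop k P \<and> pmf P (x, a, y) > 0 \<and>
     0 < \<beta>1 \<and> \<beta>1 < \<beta>2 \<and> \<beta>2 < \<beta>3 \<and>
     pp_output k P R \<beta>1 \<tau>1 \<tau>2 \<and>
     pp_output k P R \<beta>2 \<sigma>1 \<sigma>2 \<and>
     pp_output k P R \<beta>3 \<rho>1 \<rho>2 \<and>
     (let f1 = thr_clf P R \<tau>1 \<tau>2 x a;
          f2 = thr_clf P R \<sigma>1 \<sigma>2 x a;
          f3 = thr_clf P R \<rho>1 \<rho>2 x a in
      \<not> (f1 \<le> f2 \<and> f2 \<le> f3) \<and> \<not> (f1 \<ge> f2 \<and> f2 \<ge> f3))"
proof -
  let ?f = "\<lambda>\<tau>1 \<tau>2. thr_clf example_pop example_score \<tau>1 \<tau>2 0 2"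
  have "?f 0 0 = 1" "?f 1 (1/4) = 3/4" "?f 1 0 = 1"
    by (simp_all add: thr_clf_example_group2)
  then have non_monotone: "\<not> (?f 0 0 \<le> ?f 1 (1/4) \<and> ?f 1 (1/4) \<le> ?f 1 0) \<and>
      \<not> (?f 0 0 \<ge> ?f 1 (1/4) \<and> ?f 1 (1/4) \<ge> ?f 1 0)"
    by simp
  show ?thesis
    unfolding Let_def
  proof (intro exI conjI)
    show "pp_output DemographicParity example_pop example_score (1/4) 0 0"
      by (rule pp_output_example_low_slack) simp_all
    show "pp_output DemographicParity example_pop example_score (3/4) 1 (1/4)"
      using pp_output_example_high_slack[of "3/4"] by simp
    show "pp_output DemographicParity example_pop example_score 1 1 0"
      using pp_output_example_high_slack[of 1] by simp
    show "valid_pop DemographicParity example_pop"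
      by (rule valid_pop_example)
    show "pmf example_pop (0, 2, 1) > 0"
      using set_pmf_example_pop by (simp add: set_pmf_iff[symmetric] example_support_def)
  qed (use non_monotone in simp_all)
qed

end
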